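(* Suppose $g$ satisfies the Hölderian error bound $\frac{\alpha}{r}\,\mathrm{dist}(\mathbf{x},\mathcal{X}_g^* )^r\leq g(\mathbf{x}) - g^*$ for all $\mathbf{x}\in\mathcal{Z}$ with $\alpha>0$ and $r \geq 1$. Let $M= \max_{\mathbf{x}\in \mathcal{X}_g^*} \|\nabla f(\mathbf{x})\|_*$. (i) If $f$ is convex and we set $\epsilon_g = \frac{\alpha}{r}\left(\frac{\epsilon_f}{M}\right)^r$, then running CG-BiO with stepsize $\gamma_k=2/(k+2)$, after $K=\mathcal{O}(1/\epsilon_f^r)$ iterations we have $|f(\mathbf{x}_K)-f^*| \leq \epsilon_f$ and $g(\mathbf{x}_K) - g^* \leq \epsilon_g$. (ii) If $f$ is non-convex and we set $\epsilon_g = \min\{\frac{\alpha}{r}\left(\frac{\epsilon_f}{2M}\right)^r, \frac{\alpha}{r}\bigl(\frac{ \epsilon_f}{2L_f}\bigr)^{r/2}\}$, then running CG-BiO with constant stepsize $\gamma_k=\min\{\frac{\epsilon_f}{L_fD^2},\frac{\epsilon_g}{L_gD^2}\}$, after $K=\mathcal{O}(1/\epsilon_f^{r+1})$ iterations there exists $k^*\in\{0,\dots,K-1\}$ such that $|\mathcal{G} (\mathbf{x}_{k^*})| \leq \epsilon_f$ and $g(\mathbf{x}_{k^*})-g^*\leq \epsilon_g$.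
   Context: Consider the simple bilevel problem $\min_{\mathbf{x}\in\mathbb{R}^d} f(\mathbf{x})$ s.t. $\mathbf{x}\in \operatorname*{arg\,min}_{\mathbf{z}\in\mathcal{Z}} g(\mathbf{z})$. Assume: $\mathcal{Z}\subset\mathbb{R}^d$ is convex and compact with diameter $D$ in a norm $\|\cdot\|$ (dual norm $\|\cdot\|_*$); $g$ is convex and continuously differentiable on an open set containing $\mathcal{Z}$ with $L_g$-Lipschitz gradient; $f$ is continuously differentiable with $L_f$-Lipschitz gradient. Let $g^*=\min_{\mathbf{z}\in\mathcal{Z}}g(\mathbf{z})$, $\mathcal{X}_g^*=\operatorname*{arg\,min}_{\mathbf{z}\in\mathcal{Z}}g(\mathbf{z})$, $f^*$ the optimal value of the bilevel problem, $\mathrm{dist}(\mathbf{x},\mathcal{X}_g^* )=\inf_{\mathbf{x}'\in\mathcal{X}_g^*}\|\mathbf{x}-\mathbf{x}'\|$, and $\mathcal{G}(\mathbf{x})=\max_{\mathbf{s}\in\mathcal{X}_g^*}\langle\nabla f(\mathbf{x}),\mathbf{x}-\mathbf{s}\rangle$ the Frank–Wolfe gap. The CG-BiO algorithm: choose $\mathbf{x}_0\in\mathcal{Z}$ with $g(\mathbf{x}_0)-g^*\le \epsilon_g/2$; at iteration $k$, let $\mathcal{X}_k=\{\mathbf{s}\in\mathcal{Z}: \langle\nabla g(\mathbf{x}_k),\mathbf{s}-\mathbf{x}_k\rangle\le g(\mathbf{x}_0)-g(\mathbf{x}_k)\}$, compute $\mathbf{s}_k\in\operatorname*{arg\,min}_{\mathbf{s}\in\mathcal{X}_k}\langle\nabla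 f(\mathbf{x}_k),\mathbf{s}\rangle$ and set $\mathbf{x}_{k+1}=(1-\gamma_k)\mathbf{x}_k+\gamma_k\mathbf{s}_k$. *)

theory Defs
  imports "HOL-Analysis.Analysis"
begin

definition is_norm :: "('a::real_vector \<Rightarrow> real) \<Rightarrow> bool" where
  "is_norm N \<longleftrightarrow> (\<forall>x. 0 \<le> N x) \<and> (\<forall>x. N x = 0 \<longleftrightarrow> x = 0)
     \<and> (\<forall>c x. N (c *\<^sub>R x) = \<bar>c\<bar> * N x) \<and> (\<forall>x y. N (x + y) \<le> N x + N y)"

definition dual_norm :: "('a::real_inner \<Rightarrow> real) \<Rightarrow> 'a \<Rightarrow> real" where
  "dual_norm N y = (SUP x\<in>{x. N x \<le> 1}. y \<bullet> x)"

definition ndist :: "('a::real_vector \<Rightarrow> real) \<Rightarrow> 'a \<Rightarrow> 'a set \<Rightarrow> real" where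
  "ndist N x A = (INF y\<in>A. N (x - y))"

definition ndiam :: "('a::real_vector \<Rightarrow> real) \<Rightarrow> 'a set \<Rightarrow> real" where
  "ndiam N A = (SUP p\<in>A \<times> A. N (fst p - snd p))"

definition lower_min :: "'a set \<Rightarrow> ('a \<Rightarrow> real) \<Rightarrow> real" where
  "lower_min Z g = (INF z\<in>Z. g z)"

definition lower_argmin :: "'a set \<Rightarrow> ('a \<Rightarrow> real) \<Rightarrow> 'a set" where
  "lower_argmin Z g = {z\<in>Z. g z = lower_min Z g}"

definition bilevel_opt :: "'a set \<Rightarrow> ('a \<Rightarrow> real) \<Rightarrow> ('a \<Rightarrow> real) \<Rightarrow> real" where
  "bilevel_opt Z f g = (INF x\<in>lower_argmin Z g. f x)"

definition fw_gap :: "'a::real_inner set \<Rightarrow> ('a \<Rightarrow> real) \<Rightarrow> ('a \<Rightarrow> 'a) \<Rightarrow> 'a \<Rightarrow> real" where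
  "fw_gap Z g gf x = (SUP s\<in>lower_argmin Z g. gf x \<bullet> (x - s))"

definition cut_set :: "'a::real_inner set \<Rightarrow> ('a \<Rightarrow> real) \<Rightarrow> ('a \<Rightarrow> 'a) \<Rightarrow> 'a \<Rightarrow> 'a \<Rightarrow> 'a set" where
  "cut_set Z g gg x0 xk = {t\<in>Z. gg xk \<bullet> (t - xk) \<le> g x0 - g xk}"

text \<open>(x, s) is a run of CG-BiO with accuracy eps_g and stepsizes gamma
  (gf, gg are the gradients of f, g).\<close>
definition cgbio_run :: "'a::real_inner set \<Rightarrow> ('a \<Rightarrow> real) \<Rightarrow> ('a \<Rightarrow> 'a) \<Rightarrow> ('a \<Rightarrow> 'a)
    \<Rightarrow> real \<Rightarrow> (nat \<Rightarrow> real) \<Rightarrow> (nat \<Rightarrow> 'a) \<Rightarrow> (nat \<Rightarrow> 'a) \<Rightarrow> bool" where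
  "cgbio_run Z g gg gf eps_g \<gamma> x s \<longleftrightarrow>
     x 0 \<in> Z \<and> g (x 0) - lower_min Z g \<le> eps_g / 2 \<and>
     (\<forall>k. s k \<in> cut_set Z g gg (x 0) (x k) \<and>
          (\<forall>t\<in>cut_set Z g gg (x 0) (x k). gf (x k) \<bullet> s k \<le> gf (x k) \<bullet> t)) \<and>
     (\<forall>k. x (Suc k) = (1 - \<gamma> k) *\<^sub>R x k + \<gamma> k *\<^sub>R s k)"

end

theory Submission
  imports Defs
begin

(* Two descent inequalities along the iterates drive both parts. Smoothness of f gives
   f(x_{k+1}) <= f(x_k) + gamma_k <grad f(x_k), s_k - x_k> + gamma_k^2 L_f D^2 / 2, and smoothness
   of g together with the cut gives
   g(x_{k+1}) <= g(x_k) + gamma_k (g(x_0) - g(x_k)) + gamma_k^2 L_g D^2 / 2.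
   Since g is convex, X_g^* lies in every cut set X_k, so s_k is compared against X_g^*.
   (i) For convex f the Frank-Wolfe recursion with steps 2/(k+2) gives f(x_K) - f^* = O(1/K) and
   g(x_K) - g(x_0) = O(1/K). The Hoelderian error bound turns g(x_K) - g^* <= eps_g into
   a point of X_g^* within distance eps_f / M of x_K, and convexity of f at that point gives
   f(x_K) >= f^* - eps_f.
   (ii) With a constant step gamma ~ eps_f^r, g(x_k) - g^* <= eps_g for all k, and telescoping
   the descent inequality of f over K = O(1/(gamma eps_f)) steps forces some
   <grad f(x_k), x_k - s_k> <= eps_f, which dominates the Frank-Wolfe gap; the error bound again
   bounds the gap from below by -eps_f. *)

lemma has_derivative_along_line:
  assumes "(h has_derivative (\<lambda>v. G \<bullet> v)) (at (x + t *\<^sub>R d))"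
  shows "((\<lambda>t. h (x + t *\<^sub>R d)) has_real_derivative (G \<bullet> d)) (at t)"
proof -
  have "((\<lambda>t. x + t *\<^sub>R d) has_derivative (\<lambda>s. s *\<^sub>R d)) (at t)"
    by (auto intro!: derivative_eq_intros)
  from diff_chain_at[OF this assms] show ?thesis
    by (simp add: has_field_derivative_def comp_def) (metis (no_types, lifting) ext mult.commute)
qed

locale norm_function =
  fixes N :: "'a::euclidean_space \<Rightarrow> real"
  assumes is_norm: "is_norm N"
begin

lemma N_nonneg: "0 \<le> N x"
  and N_eq_0_iff: "N x = 0 \<longleftrightarrow> x = 0"
  and N_scaleR: "N (c *\<^sub>R x) = \<bar>c\<bar> * N x"
  and N_triangle: "N (x + y) \<le> N x + N y"
  using is_norm unfolding is_norm_def by blast+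

lemma N_zero [simp]: "N 0 = 0"
  by (simp add: N_eq_0_iff)

lemma N_pos: "x \<noteq> 0 \<Longrightarrow> 0 < N x"
  using N_nonneg N_eq_0_iff by (simp add: order_less_le)

lemma N_minus: "N (- x) = N x"
  using N_scaleR[of "-1" x] by simp

lemma N_commute: "N (x - y) = N (y - x)"
  using N_minus[of "y - x"] by simp

lemma N_sum_le: "N (sum h A) \<le> (\<Sum>a\<in>A. N (h a))"
proof (induction A rule: infinite_finite_induct)
  case (insert a A)
  then show ?case using N_triangle[of "h a" "sum h A"] by simp
qed simp_all

lemma N_le_norm: "N x \<le> (\<Sum>b\<in>Basis. N b) * norm x"
proof -
  have "N x = N (\<Sum>b\<in>Basis. (x \<bullet> b) *\<^sub>R b)" by (simp add: euclidean_representation)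
  also have "\<dots> \<le> (\<Sum>b\<in>Basis. \<bar>x \<bullet> b\<bar> * N b)" using N_sum_le[of "\<lambda>b. (x \<bullet> b) *\<^sub>R b" Basis] by (simp add: N_scaleR)
  also have "\<dots> \<le> (\<Sum>b\<in>Basis. norm x * N b)"
    by (intro sum_mono mult_right_mono) (auto simp: Basis_le_norm N_nonneg)
  finally show ?thesis by (simp add: sum_distrib_left mult.commute)
qed

lemma continuous_on_N: "continuous_on S N"
proof -
  define K where "K = (\<Sum>b\<in>Basis. N b)"
  have "\<bar>N x - N y\<bar> \<le> K * norm (x - y)" for x y
  proof -
    have "N x \<le> N y + N (x - y)" "N y \<le> N x + N (x - y)"
      using N_triangle[of y "x - y"] N_triangle[of x "y - x"] N_commute[of x y] by simp_all
    then have "\<bar>N x - N y\<bar> \<le> N (x - y)" by linarith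
    also have "\<dots> \<le> K * norm (x - y)" unfolding K_def by (rule N_le_norm)
    finally show ?thesis .
  qed
  moreover have "K \<ge> 0" unfolding K_def by (simp add: sum_nonneg N_nonneg)
  ultimately have "K-lipschitz_on S N"
    by (intro lipschitz_onI) (simp_all add: dist_real_def dist_norm)
  then show ?thesis by (rule lipschitz_on_continuous_on)
qed

lemma norm_le_N: "\<exists>c>0. \<forall>x. c * norm x \<le> N x"
proof -
  obtain u where u: "u \<in> sphere 0 1" "\<forall>y\<in>sphere 0 1. N u \<le> N y"
    using continuous_attains_inf[of "sphere (0::'a) 1" N] continuous_on_N by auto
  have "N u * norm x \<le> N x" for x
  proof (cases "x = 0")
    case False
    then have "N u \<le> N (inverse (norm x) *\<^sub>R x)" using u by auto
    then show ?thesis using False by (simp add: N_scaleR field_simps)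
  qed simp
  moreover have "N u > 0" using u(1) by (intro N_pos) auto
  ultimately show ?thesis by blast
qed

lemma inner_le_if_N_le_1: "\<exists>c>0. \<forall>x y. N x \<le> 1 \<longrightarrow> y \<bullet> x \<le> norm y / c"
proof -
  obtain c where c: "c > 0" "\<forall>x. c * norm x \<le> N x" using norm_le_N by blast
  have "y \<bullet> x \<le> norm y / c" if "N x \<le> 1" for x y
  proof -
    have "c * norm x \<le> 1" using c(2) that by (meson order_trans)
    then have "norm x \<le> 1 / c" using c(1) by (simp add: field_simps)
    then have "norm y * norm x \<le> norm y / c" using mult_left_mono[of "norm x" "1 / c" "norm y"] by simp
    then show ?thesis using norm_cauchy_schwarz[of y x] by linarith
  qed
  then show ?thesis using c(1) by blast
qed

lemma bdd_above_dual: "bdd_above ((\<lambda>x. y \<bullet> x) ` {x. N x \<le> 1})"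
proof -
  obtain c where "\<forall>x y. N x \<le> 1 \<longrightarrow> y \<bullet> x \<le> norm y / c" using inner_le_if_N_le_1 by blast
  then show ?thesis by (intro bdd_aboveI2[where M = "norm y / c"]) simp
qed

lemma dual_norm_le_norm: "\<exists>c>0. \<forall>y. dual_norm N y \<le> norm y / c"
proof -
  obtain c where c: "c > 0" "\<forall>x y. N x \<le> 1 \<longrightarrow> y \<bullet> x \<le> norm y / c"
    using inner_le_if_N_le_1 by blast
  have "dual_norm N y \<le> norm y / c" for y
    unfolding dual_norm_def using c(2) by (intro cSUP_least) (auto intro!: exI[of _ 0])
  then show ?thesis using c(1) by blast
qed

lemma inner_le_dual_norm: "y \<bullet> h \<le> dual_norm N y * N h"
proof (cases "h = 0")
  case False
  then have hp: "N h > 0" by (rule N_pos)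
  have "y \<bullet> (inverse (N h) *\<^sub>R h) \<le> dual_norm N y" unfolding dual_norm_def
    using hp by (intro cSUP_upper bdd_above_dual) (simp add: N_scaleR)
  then show ?thesis using hp by (simp add: field_simps)
qed simp

lemma minus_dual_norm_le_inner: "- (dual_norm N y * N h) \<le> y \<bullet> h"
  using inner_le_dual_norm[of y "- h"] by (simp add: N_minus)

lemma dual_norm_nonneg: "0 \<le> dual_norm N y"
proof -
  have "y \<bullet> 0 \<le> dual_norm N y" unfolding dual_norm_def by (intro cSUP_upper bdd_above_dual) simp
  then show ?thesis by simp
qed

lemma descent_lemma:
  assumes S: "convex S" "S \<subseteq> U"
    and grad: "\<forall>x\<in>U. (h has_derivative (\<lambda>v. G x \<bullet> v)) (at x)"
    and lip: "\<forall>x\<in>U. \<forall>y\<in>U. dual_norm N (G x - G y) \<le> L * N (x - y)"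
    and x: "x \<in> S" and y: "y \<in> S"
  shows "h y \<le> h x + G x \<bullet> (y - x) + L / 2 * (N (y - x))\<^sup>2"
proof -
  define d where "d = y - x"
  define \<phi> where "\<phi> t = h (x + t *\<^sub>R d) - t * (G x \<bullet> d) - L / 2 * t\<^sup>2 * (N d)\<^sup>2" for t
  have "\<phi> 1 \<le> \<phi> 0"
  proof (rule DERIV_nonpos_imp_nonincreasing[of 0 1 \<phi>])
    fix t :: real assume t: "0 \<le> t" "t \<le> 1"
    have "x + t *\<^sub>R d = (1 - t) *\<^sub>R x + t *\<^sub>R y" by (simp add: d_def algebra_simps)
    also have "\<dots> \<in> S" using S(1) x y t by (simp add: convex_alt)
    finally have xt: "x + t *\<^sub>R d \<in> U" using S(2) by blast
    have line: "((\<lambda>t. h (x + t *\<^sub>R d)) has_real_derivative (G (x + t *\<^sub>R d) \<bullet> d)) (at t)"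
      using grad xt by (intro has_derivative_along_line) blast
    have deriv: "DERIV \<phi> t :> G (x + t *\<^sub>R d) \<bullet> d - G x \<bullet> d - L / 2 * (2 * t) * (N d)\<^sup>2"
      unfolding \<phi>_def by (rule derivative_eq_intros line | simp)+
    have "(G (x + t *\<^sub>R d) - G x) \<bullet> d \<le> dual_norm N (G (x + t *\<^sub>R d) - G x) * N d"
      by (rule inner_le_dual_norm)
    also have "\<dots> \<le> L * N (t *\<^sub>R d) * N d"
    proof (intro mult_right_mono N_nonneg)
      show "dual_norm N (G (x + t *\<^sub>R d) - G x) \<le> L * N (t *\<^sub>R d)"
        using lip xt x S(2) by (metis add_diff_cancel_left' subsetD)
    qed
    also have "\<dots> = L * t * (N d)\<^sup>2" using t by (simp add: N_scaleR power2_eq_square)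
    finally have "G (x + t *\<^sub>R d) \<bullet> d - G x \<bullet> d - L / 2 * (2 * t) * (N d)\<^sup>2 \<le> 0"
      by (simp add: inner_diff_left)
    with deriv show "\<exists>y. DERIV \<phi> t :> y \<and> y \<le> 0" by blast
  qed simp
  then show ?thesis by (simp add: \<phi>_def d_def)
qed

end

lemma convex_on_gradient_inequality:
  assumes convex: "convex_on UNIV h" and grad: "(h has_derivative (\<lambda>v. G \<bullet> v)) (at x)"
  shows "h x + G \<bullet> (y - x) \<le> h y"
proof -
  define \<psi> where "\<psi> t = h (x + t *\<^sub>R (y - x))" for t
  have "convex_on UNIV \<psi>"
  proof (rule convex_onI)
    fix t a b :: real assume t: "0 < t" "t < 1"
    have "x + ((1 - t) * a + t * b) *\<^sub>R (y - x)
        = (1 - t) *\<^sub>R (x + a *\<^sub>R (y - x)) + t *\<^sub>R (x + b *\<^sub>R (y - x))"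
      by (simp add: algebra_simps)
    then show "\<psi> ((1 - t) *\<^sub>R a + t *\<^sub>R b) \<le> (1 - t) * \<psi> a + t * \<psi> b"
      unfolding \<psi>_def using convex_onD[OF convex, of t] t by simp
  qed simp
  moreover have "(\<psi> has_real_derivative (G \<bullet> (y - x))) (at 0)"
    unfolding \<psi>_def by (rule has_derivative_along_line) (use grad in simp)
  ultimately have "\<psi> 1 - \<psi> 0 \<ge> G \<bullet> (y - x) * (1 - 0)"
    by (intro convex_on_imp_above_tangent[where A = UNIV]) auto
  then show ?thesis by (simp add: \<psi>_def)
qed

lemma open_loop_recursion_bound:
  fixes a :: "nat \<Rightarrow> real"
  assumes B: "B \<ge> 0"
    and rec: "\<And>k. a (Suc k) \<le> (1 - 2 / (real k + 2)) * a k + B * (2 / (real k + 2))\<^sup>2 / 2"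
    and k: "0 < k"
  shows "a k \<le> 2 * B / (real k + 2)"
proof -
  have "a (Suc n) \<le> 2 * B / (real n + 3)" for n
  proof (induction n)
    case 0
    show ?case using rec[of 0] B by (simp add: power2_eq_square)
  next
    case (Suc n)
    define m where "m = real n"
    have m: "m \<ge> 0" by (simp add: m_def)
    have "1 - 2 / (real (Suc n) + 2) = (m + 1) / (m + 3)" using m by (simp add: m_def field_simps)
    then have "a (Suc (Suc n)) \<le> (m + 1) / (m + 3) * a (Suc n) + B * (2 / (m + 3))\<^sup>2 / 2"
      using rec[of "Suc n"] by (simp add: m_def add.commute)
    also have "\<dots> \<le> (m + 1) / (m + 3) * (2 * B / (m + 3)) + B * (2 / (m + 3))\<^sup>2 / 2"
      using Suc m by (intro add_right_mono mult_left_mono) (auto simp: m_def)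
    also have "\<dots> = 2 * B * (m + 2) / (m + 3)\<^sup>2"
      using m by (simp add: divide_simps power2_eq_square) (simp add: algebra_simps)
    also have "\<dots> \<le> 2 * B / (m + 4)"
    proof -
      have "(m + 2) * (m + 4) \<le> (m + 3)\<^sup>2" by (simp add: power2_eq_square algebra_simps)
      then have "(m + 2) / (m + 3)\<^sup>2 \<le> 1 / (m + 4)" using m by (simp add: field_simps)
      from mult_left_mono[OF this, of "2 * B"] show ?thesis using B by simp
    qed
    finally show ?case by (simp add: m_def add.commute)
  qed
  with k show ?thesis by (cases k) (auto simp: add.commute)
qed

lemma constant_step_recursion_bound:
  fixes e :: "nat \<Rightarrow> real"
  assumes "0 \<le> \<gamma>" "\<gamma> \<le> 1" "e 0 \<le> E" "\<And>k. e (Suc k) \<le> (1 - \<gamma>) * e k + \<gamma> * E"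
  shows "e k \<le> E"
proof (induction k)
  case (Suc k)
  have "(1 - \<gamma>) * e k \<le> (1 - \<gamma>) * E" using Suc assms by (intro mult_left_mono) auto
  then show ?case using assms(4)[of k] by (simp add: algebra_simps)
qed (use assms in simp)

locale cgbio_setting = norm_function N
  for N :: "'a::euclidean_space \<Rightarrow> real" +
  fixes Z U :: "'a set"
    and f g :: "'a \<Rightarrow> real"
    and gf gg :: "'a \<Rightarrow> 'a"
    and Lf Lg \<alpha> r :: real
  assumes Z_convex: "convex Z" and Z_compact: "compact Z" and Z_nonempty: "Z \<noteq> {}"
    and Z_sub_U: "Z \<subseteq> U"
    and g_convex: "convex_on UNIV g"
    and g_grad: "\<forall>x\<in>U. (g has_derivative (\<lambda>h. gg x \<bullet> h)) (at x)"
    and g_Lip: "\<forall>x\<in>U. \<forall>y\<in>U. dual_norm N (gg x - gg y) \<le> Lg * N (x - y)"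
    and f_grad: "\<forall>x. (f has_derivative (\<lambda>h. gf x \<bullet> h)) (at x)"
    and f_C1: "continuous_on UNIV gf"
    and f_Lip: "\<forall>x y. dual_norm N (gf x - gf y) \<le> Lf * N (x - y)"
    and Lf_pos: "Lf > 0" and Lg_pos: "Lg > 0"
    and alpha_pos: "\<alpha> > 0" and r_ge1: "r \<ge> 1"
    and holder_EB: "\<forall>x\<in>Z. \<alpha> / r * ndist N x (lower_argmin Z g) powr r \<le> g x - lower_min Z g"
    and M_pos: "(SUP x\<in>lower_argmin Z g. dual_norm N (gf x)) > 0"
begin

abbreviation "gs \<equiv> lower_min Z g"
abbreviation "Xs \<equiv> lower_argmin Z g"
abbreviation "fs \<equiv> bilevel_opt Z f g"
abbreviation "M \<equiv> SUP x\<in>Xs. dual_norm N (gf x)"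
abbreviation "D \<equiv> ndiam N Z"

abbreviation "eps_g_convex \<epsilon> \<equiv> \<alpha> / r * (\<epsilon> / M) powr r"
abbreviation "eps_g_nonconvex \<epsilon> \<equiv>
  min (\<alpha> / r * (\<epsilon> / (2 * M)) powr r) (\<alpha> / r * (\<epsilon> / (2 * Lf)) powr (r / 2))"
abbreviation "step_nonconvex \<epsilon> \<equiv> min (\<epsilon> / (Lf * D\<^sup>2)) (eps_g_nonconvex \<epsilon> / (Lg * D\<^sup>2))"

abbreviation "convex_guarantee C \<epsilon> \<equiv> \<forall>x s.
  cgbio_run Z g gg gf (eps_g_convex \<epsilon>) (\<lambda>k. 2 / (real k + 2)) x s \<longrightarrow>
  (\<forall>K::nat. real K \<ge> C / \<epsilon> powr r \<longrightarrow> \<bar>f (x K) - fs\<bar> \<le> \<epsilon> \<and> g (x K) - gs \<le> eps_g_convex \<epsilon>)"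

abbreviation "nonconvex_guarantee C \<epsilon> \<equiv> \<forall>x s.
  cgbio_run Z g gg gf (eps_g_nonconvex \<epsilon>) (\<lambda>k. step_nonconvex \<epsilon>) x s \<longrightarrow>
  (\<forall>K::nat. real K \<ge> C / \<epsilon> powr (r + 1) \<longrightarrow>
     (\<exists>k<K. \<bar>fw_gap Z g gf (x k)\<bar> \<le> \<epsilon> \<and> g (x k) - gs \<le> eps_g_nonconvex \<epsilon>))"

lemma continuous_on_g: "continuous_on Z g"
  using g_grad Z_sub_U has_derivative_continuous by (intro continuous_at_imp_continuous_on) blast

lemma continuous_on_f: "continuous_on S f"
  using f_grad has_derivative_continuous by (intro continuous_at_imp_continuous_on) blast

lemma lower_min_attained: "\<exists>z\<in>Z. g z = gs"
  and lower_min_le: "z \<in> Z \<Longrightarrow> gs \<le> g z"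
proof -
  obtain z0 where z0: "z0 \<in> Z" "\<forall>y\<in>Z. g z0 \<le> g y"
    using continuous_attains_inf[OF Z_compact Z_nonempty continuous_on_g] by blast
  then have "gs = g z0" unfolding lower_min_def by (intro cInf_eq_minimum) auto
  with z0 show "\<exists>z\<in>Z. g z = gs" "z \<in> Z \<Longrightarrow> gs \<le> g z" by auto
qed

lemma lower_argmin_subset: "Xs \<subseteq> Z"
  by (auto simp: lower_argmin_def)

lemma lower_argmin_nonempty: "Xs \<noteq> {}"
  using lower_min_attained by (auto simp: lower_argmin_def)

lemma compact_lower_argmin: "compact Xs"
proof -
  have "closed {z\<in>Z. g z = gs}"
    using continuous_on_g Z_compact by (intro continuous_closed_preimage_constant compact_imp_closed)
  moreover have "Xs = Z \<inter> {z\<in>Z. g z = gs}" by (auto simp: lower_argmin_def)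
  ultimately show ?thesis using Z_compact by (simp add: compact_Int_closed)
qed

lemma bilevel_opt_attained: "\<exists>p\<in>Xs. f p = fs"
  and bilevel_opt_le: "p \<in> Xs \<Longrightarrow> fs \<le> f p"
proof -
  obtain p0 where p0: "p0 \<in> Xs" "\<forall>y\<in>Xs. f p0 \<le> f y"
    using continuous_attains_inf[OF compact_lower_argmin lower_argmin_nonempty continuous_on_f] by blast
  then have "fs = f p0" unfolding bilevel_opt_def by (intro cInf_eq_minimum) auto
  with p0 show "\<exists>p\<in>Xs. f p = fs" "p \<in> Xs \<Longrightarrow> fs \<le> f p" by auto
qed

lemma f_bounded: "\<exists>F>0. \<forall>z\<in>Z. \<bar>f z\<bar> \<le> F"
proof -
  have "compact (f ` Z)" by (intro compact_continuous_image continuous_on_f Z_compact)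
  then show ?thesis using compact_imp_bounded bounded_pos by (metis image_eqI real_norm_def)
qed

lemma N_diff_le_diam: "x \<in> Z \<Longrightarrow> y \<in> Z \<Longrightarrow> N (x - y) \<le> D"
  and diam_nonneg: "0 \<le> D"
proof -
  have "continuous_on (Z \<times> Z) (\<lambda>p. N (fst p - snd p))"
    by (intro continuous_on_compose2[OF continuous_on_N[of UNIV]] continuous_intros) auto
  then have "compact ((\<lambda>p. N (fst p - snd p)) ` (Z \<times> Z))"
    by (intro compact_continuous_image compact_Times Z_compact)
  then have bdd: "bdd_above ((\<lambda>p. N (fst p - snd p)) ` (Z \<times> Z))"
    by (intro bounded_imp_bdd_above compact_imp_bounded)
  show le: "N (x - y) \<le> D" if "x \<in> Z" "y \<in> Z" for x y
    unfolding ndiam_def using cSUP_upper[OF _ bdd, of "(x, y)"] that by auto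
  obtain z where "z \<in> Z" using Z_nonempty by blast
  from le[OF this this] show "0 \<le> D" by simp
qed

lemma Z_singleton_if_diam_zero:
  assumes "D = 0" "x \<in> Z"
  shows "Z = {x}"
proof -
  have "y = x" if "y \<in> Z" for y
    using N_diff_le_diam[OF that assms(2)] assms(1) N_nonneg[of "y - x"] N_eq_0_iff[of "y - x"] by simp
  with assms(2) show ?thesis by blast
qed

lemma dual_norm_grad_le_M: "p \<in> Xs \<Longrightarrow> dual_norm N (gf p) \<le> M"
proof -
  assume p: "p \<in> Xs"
  obtain c where c: "c > 0" "\<forall>y. dual_norm N y \<le> norm y / c" using dual_norm_le_norm by blast
  have "compact (gf ` Xs)"
    using compact_lower_argmin f_C1 by (intro compact_continuous_image) (auto intro: continuous_on_subset)
  then obtain b where b: "\<forall>x\<in>Xs. norm (gf x) \<le> b"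
    using compact_imp_bounded bounded_pos by (metis image_eqI)
  have "dual_norm N (gf x) \<le> b / c" if "x \<in> Xs" for x
    using b c that by (meson divide_right_mono less_eq_real_def order_trans)
  then have "bdd_above ((\<lambda>x. dual_norm N (gf x)) ` Xs)" by (rule bdd_aboveI2)
  with p show ?thesis by (rule cSUP_upper)
qed

lemma nearest_point_exists: "x \<in> Z \<Longrightarrow> \<exists>p\<in>Xs. N (x - p) = ndist N x Xs"
proof -
  have "continuous_on Xs (\<lambda>y. N (x - y))"
    by (intro continuous_on_compose2[OF continuous_on_N[of UNIV]] continuous_intros) auto
  then obtain p where p: "p \<in> Xs" "\<forall>y\<in>Xs. N (x - p) \<le> N (x - y)"
    using continuous_attains_inf[OF compact_lower_argmin lower_argmin_nonempty] by blast
  then have "ndist N x Xs = N (x - p)" unfolding ndist_def by (intro cInf_eq_minimum) auto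
  with p show ?thesis by auto
qed

lemma dist_le_of_error_bound:
  assumes x: "x \<in> Z" and t: "t \<ge> 0" and gap: "g x - gs \<le> \<alpha> / r * t powr r"
    and p: "N (x - p) = ndist N x Xs"
  shows "N (x - p) \<le> t"
proof -
  have "\<alpha> / r * N (x - p) powr r \<le> \<alpha> / r * t powr r"
    using holder_EB x p gap by auto
  then have le: "N (x - p) powr r \<le> t powr r" using alpha_pos r_ge1 by (simp add: field_simps)
  show ?thesis
  proof (rule ccontr)
    assume "\<not> N (x - p) \<le> t"
    then have "t powr r < N (x - p) powr r" using t r_ge1 by (intro powr_less_mono2) auto
    with le show False by simp
  qed
qed

lemma lower_argmin_subset_cut_set:
  assumes "x0 \<in> Z" "xk \<in> Z"
  shows "Xs \<subseteq> cut_set Z g gg x0 xk"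
proof
  fix p assume p: "p \<in> Xs"
  have "g xk + gg xk \<bullet> (p - xk) \<le> g p"
    using convex_on_gradient_inequality[OF g_convex] g_grad Z_sub_U assms by blast
  moreover have "g p = gs" "p \<in> Z" using p by (auto simp: lower_argmin_def)
  moreover have "gs \<le> g x0" using lower_min_le[OF assms(1)] .
  ultimately show "p \<in> cut_set Z g gg x0 xk" by (auto simp: cut_set_def)
qed

lemma fw_gap_le_of_cut_set_argmin:
  assumes "x0 \<in> Z" "xk \<in> Z" "\<forall>t\<in>cut_set Z g gg x0 xk. gf xk \<bullet> sk \<le> gf xk \<bullet> t"
  shows "fw_gap Z g gf xk \<le> gf xk \<bullet> (xk - sk)"
  unfolding fw_gap_def
proof (rule cSUP_least[OF lower_argmin_nonempty])
  fix p assume "p \<in> Xs"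
  then have "gf xk \<bullet> sk \<le> gf xk \<bullet> p" using lower_argmin_subset_cut_set[OF assms(1,2)] assms(3) by blast
  then show "gf xk \<bullet> (xk - p) \<le> gf xk \<bullet> (xk - sk)" by (simp add: inner_diff_right)
qed

lemma inner_le_fw_gap: "p \<in> Xs \<Longrightarrow> gf x \<bullet> (x - p) \<le> fw_gap Z g gf x"
proof -
  assume p: "p \<in> Xs"
  have "compact ((\<lambda>s. gf x \<bullet> (x - s)) ` Xs)"
    by (intro compact_continuous_image compact_lower_argmin continuous_intros)
  then have "bdd_above ((\<lambda>s. gf x \<bullet> (x - s)) ` Xs)" by (intro bounded_imp_bdd_above compact_imp_bounded)
  with p show ?thesis unfolding fw_gap_def by (rule cSUP_upper)
qed

context
  fixes E :: real and \<gamma> :: "nat \<Rightarrow> real" and x s :: "nat \<Rightarrow> 'a"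
  assumes run: "cgbio_run Z g gg gf E \<gamma> x s"
    and step_range: "\<And>k. 0 \<le> \<gamma> k \<and> \<gamma> k \<le> 1"
begin

lemma run_s_in_Z: "s k \<in> Z"
  using run by (auto simp: cgbio_run_def cut_set_def)

lemma run_in_Z: "x k \<in> Z"
proof (induction k)
  case 0
  then show ?case using run by (simp add: cgbio_run_def)
next
  case (Suc k)
  have "x (Suc k) = (1 - \<gamma> k) *\<^sub>R x k + \<gamma> k *\<^sub>R s k" using run by (simp add: cgbio_run_def)
  also have "\<dots> \<in> Z" using Z_convex Suc run_s_in_Z step_range[of k] by (simp add: convex_alt)
  finally show ?case .
qed

lemma run_step: "x (Suc k) - x k = \<gamma> k *\<^sub>R (s k - x k)"
  using run by (simp add: cgbio_run_def algebra_simps)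

lemma N_run_step_squared_le: "(N (x (Suc k) - x k))\<^sup>2 \<le> (\<gamma> k)\<^sup>2 * D\<^sup>2"
proof -
  have "N (x (Suc k) - x k) = \<gamma> k * N (s k - x k)"
    using step_range[of k] by (simp add: run_step N_scaleR)
  also have "\<dots> \<le> \<gamma> k * D"
    using N_diff_le_diam[OF run_s_in_Z run_in_Z] step_range[of k] by (intro mult_left_mono) auto
  finally show ?thesis
    using N_nonneg by (metis power_mono power_mult_distrib)
qed

lemma f_descent_step:
  "f (x (Suc k)) \<le> f (x k) + \<gamma> k * (gf (x k) \<bullet> (s k - x k)) + Lf / 2 * (\<gamma> k)\<^sup>2 * D\<^sup>2"
proof -
  have "f (x (Suc k)) \<le> f (x k) + gf (x k) \<bullet> (x (Suc k) - x k) + Lf / 2 * (N (x (Suc k) - x k))\<^sup>2"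
    using f_grad f_Lip by (intro descent_lemma[OF convex_UNIV subset_refl]) auto
  also have "\<dots> \<le> f (x k) + gf (x k) \<bullet> (x (Suc k) - x k) + Lf / 2 * ((\<gamma> k)\<^sup>2 * D\<^sup>2)"
    using N_run_step_squared_le Lf_pos by (intro add_left_mono mult_left_mono) auto
  finally show ?thesis by (simp add: run_step)
qed

lemma g_descent_step:
  "g (x (Suc k)) \<le> g (x k) + \<gamma> k * (g (x 0) - g (x k)) + Lg / 2 * (\<gamma> k)\<^sup>2 * D\<^sup>2"
proof -
  have "g (x (Suc k)) \<le> g (x k) + gg (x k) \<bullet> (x (Suc k) - x k) + Lg / 2 * (N (x (Suc k) - x k))\<^sup>2"
    using g_grad g_Lip run_in_Z by (intro descent_lemma[OF Z_convex Z_sub_U]) auto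
  also have "\<dots> \<le> g (x k) + gg (x k) \<bullet> (x (Suc k) - x k) + Lg / 2 * ((\<gamma> k)\<^sup>2 * D\<^sup>2)"
    using N_run_step_squared_le Lg_pos by (intro add_left_mono mult_left_mono) auto
  also have "gg (x k) \<bullet> (x (Suc k) - x k) = \<gamma> k * (gg (x k) \<bullet> (s k - x k))"
    by (simp add: run_step)
  also have "\<dots> \<le> \<gamma> k * (g (x 0) - g (x k))"
    using run step_range[of k] by (intro mult_left_mono) (auto simp: cgbio_run_def cut_set_def)
  finally show ?thesis by simp
qed

lemma run_fw_gap_le: "fw_gap Z g gf (x k) \<le> gf (x k) \<bullet> (x k - s k)"
  using run run_in_Z by (intro fw_gap_le_of_cut_set_argmin) (auto simp: cgbio_run_def)

text \<open>Every point of \<open>Xs\<close> lies in the cut set, so \<open>s k\<close> does at least as well as a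
  minimiser of \<open>f\<close> over \<open>Xs\<close> in the linearised objective.\<close>
lemma f_step_convex:
  assumes f_convex: "convex_on UNIV f"
  shows "f (x (Suc k)) - fs \<le> (1 - \<gamma> k) * (f (x k) - fs) + Lf * D\<^sup>2 * (\<gamma> k)\<^sup>2 / 2"
proof -
  obtain p where p: "p \<in> Xs" "f p = fs" using bilevel_opt_attained by blast
  then have "p \<in> cut_set Z g gg (x 0) (x k)" using lower_argmin_subset_cut_set run_in_Z by blast
  then have "gf (x k) \<bullet> s k \<le> gf (x k) \<bullet> p" using run by (auto simp: cgbio_run_def)
  moreover have "f (x k) + gf (x k) \<bullet> (p - x k) \<le> f p"
    using convex_on_gradient_inequality[OF f_convex] f_grad by blast
  ultimately have "gf (x k) \<bullet> (s k - x k) \<le> fs - f (x k)" using p(2) by (simp add: inner_diff_right)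
  then have "\<gamma> k * (gf (x k) \<bullet> (s k - x k)) \<le> \<gamma> k * (fs - f (x k))"
    using step_range[of k] by (intro mult_left_mono) auto
  with f_descent_step[of k] show ?thesis by (simp add: algebra_simps)
qed

lemma g_step_from_start:
  "g (x (Suc k)) - g (x 0) \<le> (1 - \<gamma> k) * (g (x k) - g (x 0)) + Lg * D\<^sup>2 * (\<gamma> k)\<^sup>2 / 2"
  using g_descent_step[of k] by (simp add: algebra_simps)

end

lemma open_loop_f_rate:
  assumes run: "cgbio_run Z g gg gf E (\<lambda>k. 2 / (real k + 2)) x s"
    and f_convex: "convex_on UNIV f" and K: "0 < K"
  shows "f (x K) - fs \<le> 2 * (Lf * D\<^sup>2) / (real K + 2)"
  using f_step_convex[OF run _ f_convex] Lf_pos K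
  by (intro open_loop_recursion_bound[of "Lf * D\<^sup>2" "\<lambda>k. f (x k) - fs"]) (auto simp: mult_ac)

lemma open_loop_g_rate:
  assumes run: "cgbio_run Z g gg gf E (\<lambda>k. 2 / (real k + 2)) x s" and K: "0 < K"
  shows "g (x K) - g (x 0) \<le> 2 * (Lg * D\<^sup>2) / (real K + 2)"
  using g_step_from_start[OF run] Lg_pos K
  by (intro open_loop_recursion_bound[of "Lg * D\<^sup>2" "\<lambda>k. g (x k) - g (x 0)"]) (auto simp: mult_ac)

text \<open>By the error bound, a point with \<open>g y - gs \<le> eps_g_convex \<epsilon>\<close> is within \<open>\<epsilon> / M\<close> of
  some \<open>p \<in> Xs\<close>, and convexity of \<open>f\<close> at \<open>p\<close> loses at most \<open>M * (\<epsilon> / M)\<close>.\<close>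
lemma bilevel_opt_le_near_argmin:
  assumes f_convex: "convex_on UNIV f" and y: "y \<in> Z" and \<epsilon>: "\<epsilon> > 0"
    and gap: "g y - gs \<le> eps_g_convex \<epsilon>"
  shows "fs - \<epsilon> \<le> f y"
proof -
  have M: "M > 0" using M_pos .
  obtain p where p: "p \<in> Xs" "N (y - p) = ndist N y Xs" using nearest_point_exists[OF y] by blast
  have dist: "N (y - p) \<le> \<epsilon> / M" using dist_le_of_error_bound[OF y _ gap p(2)] \<epsilon> M by simp
  have "f p + gf p \<bullet> (y - p) \<le> f y" using convex_on_gradient_inequality[OF f_convex] f_grad by blast
  moreover have "- (dual_norm N (gf p) * N (y - p)) \<le> gf p \<bullet> (y - p)" by (rule minus_dual_norm_le_inner)
  moreover have "dual_norm N (gf p) * N (y - p) \<le> M * (\<epsilon> / M)"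
    using dual_norm_grad_le_M[OF p(1)] dist dual_norm_nonneg N_nonneg M by (intro mult_mono) auto
  moreover have "fs \<le> f p" using bilevel_opt_le[OF p(1)] .
  ultimately show ?thesis using M by simp
qed

lemma open_loop_accuracy:
  assumes f_convex: "convex_on UNIV f" and run: "cgbio_run Z g gg gf E (\<lambda>k. 2 / (real k + 2)) x s"
    and E: "E \<le> eps_g_convex \<epsilon>" and \<epsilon>: "0 < \<epsilon>" and K: "0 < K"
    and f_K: "2 * (Lf * D\<^sup>2) \<le> (real K + 2) * \<epsilon>"
    and g_K: "4 * (Lg * D\<^sup>2) \<le> (real K + 2) * E"
  shows "\<bar>f (x K) - fs\<bar> \<le> \<epsilon>" and "g (x K) - gs \<le> E"
proof -
  have "2 * (Lf * D\<^sup>2) / (real K + 2) \<le> \<epsilon>" using f_K by (simp add: divide_le_eq mult.commute)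
  then have f_up: "f (x K) - fs \<le> \<epsilon>" using open_loop_f_rate[OF run f_convex K] by linarith
  have "2 * (Lg * D\<^sup>2) / (real K + 2) \<le> E / 2" using g_K by (simp add: field_simps)
  moreover have "g (x 0) - gs \<le> E / 2" using run by (simp add: cgbio_run_def)
  ultimately show g_up: "g (x K) - gs \<le> E" using open_loop_g_rate[OF run K] by linarith
  have "fs - \<epsilon> \<le> f (x K)"
    using run_in_Z[OF run] \<epsilon> g_up E by (intro bilevel_opt_le_near_argmin[OF f_convex]) auto
  with f_up show "\<bar>f (x K) - fs\<bar> \<le> \<epsilon>" by simp
qed

theorem convex_rate:
  assumes f_convex: "convex_on UNIV f"
  shows "\<exists>C>0. \<forall>\<^sub>F \<epsilon> in at_right 0. convex_guarantee C \<epsilon>"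
proof -
  define C where "C = 2 * Lf * D\<^sup>2 + 4 * Lg * D\<^sup>2 * r * M powr r / \<alpha> + 1"
  have "0 \<le> 2 * Lf * D\<^sup>2" "0 \<le> 4 * Lg * D\<^sup>2 * r * M powr r / \<alpha>"
    using Lf_pos Lg_pos alpha_pos r_ge1 by simp_all
  then have C_f: "2 * Lf * D\<^sup>2 \<le> C" and C_g: "4 * Lg * D\<^sup>2 * r * M powr r / \<alpha> \<le> C"
    and "C > 0" by (simp_all add: C_def)
  moreover have "\<forall>\<^sub>F \<epsilon> in at_right 0. convex_guarantee C \<epsilon>"
  proof (rule eventually_mono[OF eventually_at_right_real[OF zero_less_one]], safe)
    fix \<epsilon> :: real and x s and K :: nat
    assume \<epsilon>: "\<epsilon> \<in> {0<..<1}" and run: "cgbio_run Z g gg gf (eps_g_convex \<epsilon>) (\<lambda>k. 2 / (real k + 2)) x s"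
      and K_ge: "C / \<epsilon> powr r \<le> real K"
    have M: "M > 0" using M_pos .
    have KC: "C \<le> real K * \<epsilon> powr r" using K_ge \<epsilon> by (simp add: field_simps)
    with \<open>C > 0\<close> have K: "0 < K" by (cases K) auto
    have "\<epsilon> powr r \<le> \<epsilon>" using powr_mono'[of 1 r \<epsilon>] \<epsilon> r_ge1 by simp
    have "2 * (Lf * D\<^sup>2) \<le> real K * \<epsilon> powr r" using C_f KC by simp
    also have "\<dots> \<le> real K * \<epsilon>" using \<open>\<epsilon> powr r \<le> \<epsilon>\<close> by (intro mult_left_mono) auto
    also have "\<dots> \<le> (real K + 2) * \<epsilon>" using \<epsilon> by (intro mult_right_mono) auto
    finally have f_K: "2 * (Lf * D\<^sup>2) \<le> (real K + 2) * \<epsilon>" .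
    have scale: "0 < \<alpha> / (r * M powr r)" using alpha_pos r_ge1 M by simp
    have "4 * (Lg * D\<^sup>2) = 4 * Lg * D\<^sup>2 * r * M powr r / \<alpha> * (\<alpha> / (r * M powr r))"
      using alpha_pos r_ge1 M by simp
    also have "\<dots> \<le> real K * \<epsilon> powr r * (\<alpha> / (r * M powr r))"
      using order_trans[OF C_g KC] scale by (intro mult_right_mono) auto
    also have "\<dots> = real K * eps_g_convex \<epsilon>" using \<epsilon> M by (simp add: powr_divide)
    also have "\<dots> \<le> (real K + 2) * eps_g_convex \<epsilon>" using alpha_pos r_ge1 by (intro mult_right_mono) auto
    finally have g_K: "4 * (Lg * D\<^sup>2) \<le> (real K + 2) * eps_g_convex \<epsilon>" .
    show "\<bar>f (x K) - fs\<bar> \<le> \<epsilon>" "g (x K) - gs \<le> eps_g_convex \<epsilon>"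
      using open_loop_accuracy[OF f_convex run order_refl _ K f_K g_K] \<epsilon> by auto
  qed
  ultimately show ?thesis by blast
qed

text \<open>Both terms of \<open>eps_g_nonconvex\<close> come from here: the error bound puts \<open>y\<close> within
  \<open>d \<le> \<epsilon> / (2 * M)\<close> and \<open>d\<^sup>2 \<le> \<epsilon> / (2 * Lf)\<close> of a point \<open>p \<in> Xs\<close>, and
  \<open>gf y \<bullet> (y - p) \<ge> - M * d - Lf * d\<^sup>2 \<ge> - \<epsilon>\<close>.\<close>
lemma fw_gap_ge_minus:
  assumes y: "y \<in> Z" and \<epsilon>: "\<epsilon> > 0" and gap: "g y - gs \<le> eps_g_nonconvex \<epsilon>"
  shows "- \<epsilon> \<le> fw_gap Z g gf y"
proof -
  have M: "M > 0" using M_pos .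
  obtain p where p: "p \<in> Xs" "N (y - p) = ndist N y Xs" using nearest_point_exists[OF y] by blast
  define d where "d = N (y - p)"
  have d_nonneg: "0 \<le> d" by (simp add: d_def N_nonneg)
  have d_M: "d \<le> \<epsilon> / (2 * M)"
    unfolding d_def using dist_le_of_error_bound[OF y _ _ p(2)] gap \<epsilon> M by simp
  define t where "t = sqrt (\<epsilon> / (2 * Lf))"
  have "t powr r = (\<epsilon> / (2 * Lf)) powr (r / 2)"
    using \<epsilon> Lf_pos by (simp add: t_def powr_half_sqrt[symmetric] powr_powr)
  then have "g y - gs \<le> \<alpha> / r * t powr r" using gap by simp
  moreover have "0 \<le> t" using \<epsilon> Lf_pos by (simp add: t_def)
  ultimately have "d \<le> t" unfolding d_def using dist_le_of_error_bound[OF y _ _ p(2)] by blast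
  then have "d * d \<le> \<epsilon> / (2 * Lf)"
    using d_nonneg mult_mono[of d t d t] \<epsilon> Lf_pos by (simp add: t_def)
  then have d_Lf: "Lf * d * d \<le> \<epsilon> / 2" using Lf_pos by (simp add: field_simps)
  have "- (dual_norm N (gf p) * d) \<le> gf p \<bullet> (y - p)"
    unfolding d_def by (rule minus_dual_norm_le_inner)
  moreover have "dual_norm N (gf p) * d \<le> M * (\<epsilon> / (2 * M))"
    using dual_norm_grad_le_M[OF p(1)] d_nonneg d_M dual_norm_nonneg M by (intro mult_mono) auto
  moreover have "- (dual_norm N (gf y - gf p) * d) \<le> (gf y - gf p) \<bullet> (y - p)"
    unfolding d_def by (rule minus_dual_norm_le_inner)
  moreover have "dual_norm N (gf y - gf p) * d \<le> Lf * d * d"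
    using f_Lip d_nonneg by (intro mult_right_mono) (auto simp: d_def)
  moreover have "gf y \<bullet> (y - p) \<le> fw_gap Z g gf y" by (rule inner_le_fw_gap[OF p(1)])
  ultimately show ?thesis using d_Lf M by (simp add: inner_diff_left)
qed

lemma constant_step_g_bound:
  assumes run: "cgbio_run Z g gg gf E (\<lambda>k. \<gamma>) x s" and \<gamma>: "0 \<le> \<gamma>" "\<gamma> \<le> 1"
    and step: "Lg * \<gamma> * D\<^sup>2 \<le> E"
  shows "g (x k) - gs \<le> E"
proof (rule constant_step_recursion_bound[OF \<gamma>])
  have start: "g (x 0) - gs \<le> E / 2" using run by (simp add: cgbio_run_def)
  moreover have "0 \<le> g (x 0) - gs" using lower_min_le run_in_Z[OF run] \<gamma> by simp
  ultimately show "g (x 0) - gs \<le> E" by simp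
  fix k
  have "Lg / 2 * \<gamma>\<^sup>2 * D\<^sup>2 \<le> \<gamma> / 2 * E"
    using mult_left_mono[OF step, of "\<gamma> / 2"] \<gamma> by (simp add: power2_eq_square mult_ac)
  moreover have "\<gamma> * (g (x 0) - gs) \<le> \<gamma> * (E / 2)" using start \<gamma> by (intro mult_left_mono) auto
  ultimately show "g (x (Suc k)) - gs \<le> (1 - \<gamma>) * (g (x k) - gs) + \<gamma> * E"
    using g_descent_step[OF run, of k] \<gamma> by (simp add: algebra_simps)
qed

lemma constant_step_f_sum:
  assumes run: "cgbio_run Z g gg gf E (\<lambda>k. \<gamma>) x s" and \<gamma>: "0 \<le> \<gamma>" "\<gamma> \<le> 1"
  shows "f (x n) \<le> f (x 0) - \<gamma> * (\<Sum>k<n. gf (x k) \<bullet> (x k - s k)) + real n * (Lf / 2 * \<gamma>\<^sup>2 * D\<^sup>2)"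
proof (induction n)
  case (Suc n)
  have "f (x (Suc n)) \<le> f (x n) - \<gamma> * (gf (x n) \<bullet> (x n - s n)) + Lf / 2 * \<gamma>\<^sup>2 * D\<^sup>2"
    using f_descent_step[OF run, of n] \<gamma> by (simp add: inner_diff_right algebra_simps)
  moreover have "\<gamma> * (\<Sum>k<Suc n. gf (x k) \<bullet> (x k - s k))
      = \<gamma> * (\<Sum>k<n. gf (x k) \<bullet> (x k - s k)) + \<gamma> * (gf (x n) \<bullet> (x n - s n))"
    by (simp add: distrib_left)
  moreover have "real (Suc n) * (Lf / 2 * \<gamma>\<^sup>2 * D\<^sup>2) = real n * (Lf / 2 * \<gamma>\<^sup>2 * D\<^sup>2) + Lf / 2 * \<gamma>\<^sup>2 * D\<^sup>2"
    by (simp add: distrib_right)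
  ultimately show ?case using Suc by linarith
qed simp

text \<open>If every gap exceeded \<open>\<epsilon>\<close>, the telescoped descent inequality would make \<open>f\<close> drop by
  more than \<open>K * \<gamma> * \<epsilon> / 2 > 2 * F\<close> on \<open>Z\<close>.\<close>
lemma constant_step_small_gap:
  assumes run: "cgbio_run Z g gg gf E (\<lambda>k. \<gamma>) x s" and \<gamma>: "0 < \<gamma>" "\<gamma> \<le> 1"
    and step: "Lf * \<gamma> * D\<^sup>2 \<le> \<epsilon>"
    and F: "\<forall>z\<in>Z. \<bar>f z\<bar> \<le> F" and K: "4 * F < real K * \<gamma> * \<epsilon>"
  shows "\<exists>k<K. gf (x k) \<bullet> (x k - s k) \<le> \<epsilon>"
proof (rule ccontr)
  assume "\<not> ?thesis"
  then have "(\<Sum>k<K. \<epsilon>) \<le> (\<Sum>k<K. gf (x k) \<bullet> (x k - s k))"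
    by (intro sum_mono) auto
  then have "real K * \<epsilon> \<le> (\<Sum>k<K. gf (x k) \<bullet> (x k - s k))" by simp
  then have "\<gamma> * (real K * \<epsilon>) \<le> \<gamma> * (\<Sum>k<K. gf (x k) \<bullet> (x k - s k))"
    using \<gamma> by (intro mult_left_mono) auto
  moreover have "Lf / 2 * \<gamma>\<^sup>2 * D\<^sup>2 \<le> \<gamma> / 2 * \<epsilon>"
    using mult_left_mono[OF step, of "\<gamma> / 2"] \<gamma> by (simp add: power2_eq_square mult_ac)
  then have "real K * (Lf / 2 * \<gamma>\<^sup>2 * D\<^sup>2) \<le> real K * (\<gamma> / 2 * \<epsilon>)" by (intro mult_left_mono) auto
  moreover have "\<bar>f (x K)\<bar> \<le> F" "\<bar>f (x 0)\<bar> \<le> F" using F run_in_Z[OF run] \<gamma> by auto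
  moreover have "\<gamma> * (real K * \<epsilon>) = real K * \<gamma> * \<epsilon>" "real K * (\<gamma> / 2 * \<epsilon>) = real K * \<gamma> * \<epsilon> / 2"
    by simp_all
  ultimately show False
    using constant_step_f_sum[OF run less_imp_le[OF \<gamma>(1)] \<gamma>(2), of K] K by (simp only: abs_le_iff) linarith
qed

lemma eps_g_nonconvex_lower_bound: "\<exists>a>0. \<forall>\<epsilon>. 0 < \<epsilon> \<and> \<epsilon> < 1 \<longrightarrow> a * \<epsilon> powr r \<le> eps_g_nonconvex \<epsilon>"
proof -
  define p1 where "p1 = (1 / (2 * M)) powr r"
  define p2 where "p2 = (1 / (2 * Lf)) powr (r / 2)"
  have p: "p1 > 0" "p2 > 0" using M_pos Lf_pos by (auto simp: p1_def p2_def)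
  have "\<alpha> / r * min p1 p2 * \<epsilon> powr r \<le> eps_g_nonconvex \<epsilon>" if \<epsilon>: "0 < \<epsilon>" "\<epsilon> < 1" for \<epsilon>
  proof -
    have "\<epsilon> powr r \<le> \<epsilon> powr (r / 2)" using powr_mono'[of "r / 2" r \<epsilon>] \<epsilon> r_ge1 by simp
    then have le1: "min p1 p2 * \<epsilon> powr r \<le> \<epsilon> powr r * p1"
      and le2: "min p1 p2 * \<epsilon> powr r \<le> \<epsilon> powr (r / 2) * p2"
      using p by (auto simp: mult.commute intro: mult_mono)
    have eq1: "(\<epsilon> / (2 * M)) powr r = \<epsilon> powr r * p1"
      and eq2: "(\<epsilon> / (2 * Lf)) powr (r / 2) = \<epsilon> powr (r / 2) * p2"
      using \<epsilon> M_pos Lf_pos by (simp_all add: p1_def p2_def powr_mult[symmetric])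
    have ar: "0 \<le> \<alpha> / r" using alpha_pos r_ge1 by simp
    show ?thesis
      unfolding eq1 eq2 using mult_left_mono[OF le1 ar] mult_left_mono[OF le2 ar] by (simp add: mult.assoc)
  qed
  moreover have "\<alpha> / r * min p1 p2 > 0" using p alpha_pos r_ge1 by simp
  ultimately show ?thesis by blast
qed

lemma step_nonconvex_lower_bound:
  assumes D: "D > 0"
  shows "\<exists>c>0. \<forall>\<epsilon>. 0 < \<epsilon> \<and> \<epsilon> < 1 \<longrightarrow> c * \<epsilon> powr r \<le> step_nonconvex \<epsilon>"
proof -
  obtain a where a: "a > 0" "\<forall>\<epsilon>. 0 < \<epsilon> \<and> \<epsilon> < 1 \<longrightarrow> a * \<epsilon> powr r \<le> eps_g_nonconvex \<epsilon>"
    using eps_g_nonconvex_lower_bound by blast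
  define c where "c = min (1 / (Lf * D\<^sup>2)) (a / (Lg * D\<^sup>2))"
  have LD: "Lf * D\<^sup>2 > 0" "Lg * D\<^sup>2 > 0" using Lf_pos Lg_pos D by simp_all
  have "c * \<epsilon> powr r \<le> step_nonconvex \<epsilon>" if \<epsilon>: "0 < \<epsilon>" "\<epsilon> < 1" for \<epsilon>
  proof -
    have "\<epsilon> powr r \<le> \<epsilon>" using powr_mono'[of 1 r \<epsilon>] \<epsilon> r_ge1 by simp
    then have f_part: "c * \<epsilon> powr r \<le> 1 / (Lf * D\<^sup>2) * \<epsilon>"
      using LD by (intro mult_mono) (auto simp: c_def)
    have "c * \<epsilon> powr r \<le> a * \<epsilon> powr r / (Lg * D\<^sup>2)"
      using mult_right_mono[of c "a / (Lg * D\<^sup>2)" "\<epsilon> powr r"] by (simp add: c_def)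
    also have "\<dots> \<le> eps_g_nonconvex \<epsilon> / (Lg * D\<^sup>2)"
      using a(2) \<epsilon> LD by (intro divide_right_mono) auto
    finally show ?thesis using f_part by simp
  qed
  moreover have "c > 0" using a(1) LD by (simp add: c_def)
  ultimately show ?thesis by blast
qed

lemma constant_step_accuracy:
  assumes run: "cgbio_run Z g gg gf E (\<lambda>k. \<gamma>) x s" and E: "E \<le> eps_g_nonconvex \<epsilon>"
    and \<gamma>: "0 < \<gamma>" "\<gamma> \<le> 1" and \<epsilon>: "0 < \<epsilon>"
    and Lf_step: "Lf * \<gamma> * D\<^sup>2 \<le> \<epsilon>" and Lg_step: "Lg * \<gamma> * D\<^sup>2 \<le> E"
    and F: "\<forall>z\<in>Z. \<bar>f z\<bar> \<le> F" and K: "4 * F < real K * \<gamma> * \<epsilon>"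
  shows "\<exists>k<K. \<bar>fw_gap Z g gf (x k)\<bar> \<le> \<epsilon> \<and> g (x k) - gs \<le> E"
proof -
  have g_up: "g (x k) - gs \<le> E" for k using constant_step_g_bound[OF run _ \<gamma>(2) Lg_step] \<gamma> by simp
  obtain k where k: "k < K" "gf (x k) \<bullet> (x k - s k) \<le> \<epsilon>"
    using constant_step_small_gap[OF run \<gamma> Lf_step F K] by blast
  have "fw_gap Z g gf (x k) \<le> gf (x k) \<bullet> (x k - s k)" using run_fw_gap_le[OF run] \<gamma> by auto
  moreover have "- \<epsilon> \<le> fw_gap Z g gf (x k)"
    using run_in_Z[OF run] g_up[of k] E \<gamma> \<epsilon> by (intro fw_gap_ge_minus) auto
  ultimately show ?thesis using k g_up by (auto simp: abs_le_iff)
qed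

lemma nonconvex_rate_pos_diam:
  assumes D: "D > 0"
  shows "\<exists>C>0. \<forall>\<^sub>F \<epsilon> in at_right 0. nonconvex_guarantee C \<epsilon>"
proof -
  obtain F where F: "F > 0" "\<forall>z\<in>Z. \<bar>f z\<bar> \<le> F" using f_bounded by blast
  obtain c where c: "c > 0" "\<forall>\<epsilon>. 0 < \<epsilon> \<and> \<epsilon> < 1 \<longrightarrow> c * \<epsilon> powr r \<le> step_nonconvex \<epsilon>"
    using step_nonconvex_lower_bound[OF D] by blast
  define C where "C = 4 * F / c + 1"
  have "C > 0" using F(1) c(1) by (simp add: C_def add_pos_pos)
  have LD: "Lf * D\<^sup>2 > 0" "Lg * D\<^sup>2 > 0" using Lf_pos Lg_pos D by simp_all
  have "\<forall>\<^sub>F \<epsilon> in at_right 0. nonconvex_guarantee C \<epsilon>"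
  proof (rule eventually_mono[OF eventually_at_right_real[of 0 "min 1 (Lf * D\<^sup>2)"]], safe)
    fix \<epsilon> :: real and x s and K :: nat
    assume \<epsilon>: "\<epsilon> \<in> {0<..<min 1 (Lf * D\<^sup>2)}"
      and run: "cgbio_run Z g gg gf (eps_g_nonconvex \<epsilon>) (\<lambda>k. step_nonconvex \<epsilon>) x s"
      and K_ge: "C / \<epsilon> powr (r + 1) \<le> real K"
    define \<gamma> where "\<gamma> = step_nonconvex \<epsilon>"
    have c_le: "c * \<epsilon> powr r \<le> \<gamma>" using c(2) \<epsilon> by (simp add: \<gamma>_def)
    moreover have "0 < c * \<epsilon> powr r" using c(1) \<epsilon> by simp
    ultimately have \<gamma>_pos: "0 < \<gamma>" by linarith
    have \<gamma>_le: "\<gamma> \<le> \<epsilon> / (Lf * D\<^sup>2)" "\<gamma> \<le> eps_g_nonconvex \<epsilon> / (Lg * D\<^sup>2)" by (simp_all add: \<gamma>_def)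
    then have Lf_step: "Lf * \<gamma> * D\<^sup>2 \<le> \<epsilon>" and Lg_step: "Lg * \<gamma> * D\<^sup>2 \<le> eps_g_nonconvex \<epsilon>"
      using LD by (simp_all add: field_simps)
    have "\<epsilon> / (Lf * D\<^sup>2) < 1" using LD \<epsilon> by simp
    with \<gamma>_le(1) have "\<gamma> \<le> 1" by linarith
    have "C * c \<le> real K * (\<epsilon> powr r * \<epsilon>) * c"
      using K_ge \<epsilon> c(1) by (intro mult_right_mono) (simp_all add: powr_add field_simps)
    also have "\<dots> = real K * (c * \<epsilon> powr r) * \<epsilon>" by (simp only: mult_ac)
    also have "\<dots> \<le> real K * \<gamma> * \<epsilon>" using c_le \<epsilon> by (intro mult_right_mono mult_left_mono) auto
    finally have "C * c \<le> real K * \<gamma> * \<epsilon>" .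
    moreover have "C * c = 4 * F + c" using c(1) by (simp add: C_def field_simps)
    ultimately have "4 * F < real K * \<gamma> * \<epsilon>" using c(1) by linarith
    then show "\<exists>k<K. \<bar>fw_gap Z g gf (x k)\<bar> \<le> \<epsilon> \<and> g (x k) - gs \<le> eps_g_nonconvex \<epsilon>"
      using constant_step_accuracy[OF run[folded \<gamma>_def] order_refl \<gamma>_pos \<open>\<gamma> \<le> 1\<close> _ Lf_step Lg_step F(2)] \<epsilon>
      by auto
  qed (use LD in simp)
  with \<open>C > 0\<close> show ?thesis by blast
qed

text \<open>When \<open>D = 0\<close> the stepsize degenerates (division by zero gives \<open>0\<close>), but then
  \<open>Z = Xs = {x 0}\<close> and the claim holds already at \<open>k = 0\<close>.\<close>
lemma nonconvex_rate_zero_diam: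
  assumes D: "D = 0"
  shows "\<exists>C>0. \<forall>\<^sub>F \<epsilon> in at_right 0. nonconvex_guarantee C \<epsilon>"
proof -
  have "\<forall>\<^sub>F \<epsilon> in at_right 0. nonconvex_guarantee 1 \<epsilon>"
  proof (rule eventually_mono[OF eventually_at_right_less], safe)
    fix \<epsilon> :: real and x s and K :: nat
    assume \<epsilon>: "0 < \<epsilon>" and run: "cgbio_run Z g gg gf (eps_g_nonconvex \<epsilon>) (\<lambda>k. step_nonconvex \<epsilon>) x s"
      and K_ge: "1 / \<epsilon> powr (r + 1) \<le> real K"
    have "0 < K" using K_ge \<epsilon> by (cases K) auto
    have "Z = {x 0}" using Z_singleton_if_diam_zero[OF D] run by (simp add: cgbio_run_def)
    then have "Xs = {x 0}" using lower_argmin_subset lower_argmin_nonempty by blast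
    then have "g (x 0) = gs" "fw_gap Z g gf (x 0) = 0" by (auto simp: lower_argmin_def fw_gap_def)
    moreover have "0 \<le> eps_g_nonconvex \<epsilon>" using alpha_pos r_ge1 by simp
    ultimately show "\<exists>k<K. \<bar>fw_gap Z g gf (x k)\<bar> \<le> \<epsilon> \<and> g (x k) - gs \<le> eps_g_nonconvex \<epsilon>"
      using \<open>0 < K\<close> \<epsilon> by (intro exI[of _ 0]) auto
  qed
  then show ?thesis using zero_less_one by blast
qed

theorem nonconvex_rate: "\<exists>C>0. \<forall>\<^sub>F \<epsilon> in at_right 0. nonconvex_guarantee C \<epsilon>"
  using nonconvex_rate_pos_diam nonconvex_rate_zero_diam diam_nonneg by (cases "D = 0") auto

end

theorem corollary1:
  fixes N :: "'a::euclidean_space \<Rightarrow> real"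
    and Z U :: "'a set"
    and f g :: "'a \<Rightarrow> real"
    and gf gg :: "'a \<Rightarrow> 'a"
    and Lf Lg \<alpha> r :: real
  assumes norm: "is_norm N"
    and Z_convex: "convex Z" and Z_compact: "compact Z"
    and U_open: "open U" and Z_sub_U: "Z \<subseteq> U"
    and g_convex: "convex_on UNIV g"
    and g_grad: "\<forall>x\<in>U. (g has_derivative (\<lambda>h. gg x \<bullet> h)) (at x)"
    and g_C1: "continuous_on U gg"
    and g_Lip: "\<forall>x\<in>U. \<forall>y\<in>U. dual_norm N (gg x - gg y) \<le> Lg * N (x - y)"
    and f_grad: "\<forall>x. (f has_derivative (\<lambda>h. gf x \<bullet> h)) (at x)"
    and f_C1: "continuous_on UNIV gf"
    and f_Lip: "\<forall>x y. dual_norm N (gf x - gf y) \<le> Lf * N (x - y)"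
    and Lf_pos: "Lf > 0" and Lg_pos: "Lg > 0"
    and alpha_pos: "\<alpha> > 0" and r_ge1: "r \<ge> 1"
    and holder_EB: "\<forall>x\<in>Z. \<alpha> / r * ndist N x (lower_argmin Z g) powr r \<le> g x - lower_min Z g"
    and M_pos: "(SUP x\<in>lower_argmin Z g. dual_norm N (gf x)) > 0"
  shows
   "(convex_on UNIV f \<longrightarrow>
      (\<exists>C>0. \<forall>\<^sub>F \<epsilon> in at_right 0.
         let M = (SUP x\<in>lower_argmin Z g. dual_norm N (gf x));
             eps_g = \<alpha> / r * (\<epsilon> / M) powr r
         in \<forall>x s. cgbio_run Z g gg gf eps_g (\<lambda>k. 2 / (real k + 2)) x s \<longrightarrow>
              (\<forall>K::nat. real K \<ge> C / \<epsilon> powr r \<longrightarrow>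
                 \<bar>f (x K) - bilevel_opt Z f g\<bar> \<le> \<epsilon> \<and> g (x K) - lower_min Z g \<le> eps_g)))
    \<and>
    (\<exists>C>0. \<forall>\<^sub>F \<epsilon> in at_right 0.
         let M = (SUP x\<in>lower_argmin Z g. dual_norm N (gf x));
             D = ndiam N Z;
             eps_g = min (\<alpha> / r * (\<epsilon> / (2 * M)) powr r) (\<alpha> / r * (\<epsilon> / (2 * Lf)) powr (r / 2));
             \<gamma> = min (\<epsilon> / (Lf * D\<^sup>2)) (eps_g / (Lg * D\<^sup>2))
         in \<forall>x s. cgbio_run Z g gg gf eps_g (\<lambda>k. \<gamma>) x s \<longrightarrow>
              (\<forall>K::nat. real K \<ge> C / \<epsilon> powr (r + 1) \<longrightarrow>
                 (\<exists>k<K. \<bar>fw_gap Z g gf (x k)\<bar> \<le> \<epsilon> \<and> g (x k) - lower_min Z g \<le> eps_g)))"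
proof (cases "Z = {}")
  case True
  then have "\<not> cgbio_run Z g gg gf e \<gamma> x s" for e \<gamma> x s by (simp add: cgbio_run_def)
  then show ?thesis by (auto simp: Let_def intro: exI[of _ 1])
next
  case False
  interpret cgbio_setting N Z U f g gf gg Lf Lg \<alpha> r
    using assms False by unfold_locales auto
  show ?thesis unfolding Let_def using convex_rate nonconvex_rate by blast
qed

end
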